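(* For all positive integers $n$ and $w$ with $w \le n$ and all (nonnegative integers) $m \le n$, $$U(n,w,m) \ge \frac{m}{n}\binom{n}{w}.$$
   Context: An $(n,4,w)$ constant-weight code is a set of binary vectors of length $n$ and Hamming weight $w$ any two of which are at Hamming distance at least $4$. $U(n,w,m)$ denotes the largest possible cardinality of a union of $m$ constant-weight codes, each with parameters $(n,4,w)$. *)

theory Defs
  imports Complex_Main
begin

definition hweight :: "bool list \<Rightarrow> nat" where
  "hweight x = card {i. i < length x \<and> x ! i}"

definition hdist :: "bool list \<Rightarrow> bool list \<Rightarrow> nat" where
  "hdist x y = card {i. i < length x \<and> x ! i \<noteq> y ! i}"

definition cw_code :: "nat \<Rightarrow> nat \<Rightarrow> bool list set \<Rightarrow> bool" where
  "cw_code n w C \<longleftrightarrow>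
     (\<forall>x\<in>C. length x = n \<and> hweight x = w) \<and>
     (\<forall>x\<in>C. \<forall>y\<in>C. x \<noteq> y \<longrightarrow> hdist x y \<ge> 4)"

definition U :: "nat \<Rightarrow> nat \<Rightarrow> nat \<Rightarrow> nat" where
  "U n w m = Max {card (\<Union>i<m. C i) | C. \<forall>i<m. cw_code n w (C i)}"

end

theory Submission
  imports Defs "HOL-Number_Theory.Cong"
begin

text \<open>
  Identify a word with the set of positions of its ones. Two distinct words of the same weight
  are at even distance, and at distance 2 exactly when one arises from the other by moving a
  single one from position \<open>i\<close> to position \<open>j \<noteq> i\<close>; this changes the sum of the positions of the
  ones by \<open>j - i \<not>\<equiv> 0 (mod n)\<close>. Hence the words of weight \<open>w\<close> whose position sum lies in a fixed
  residue class modulo \<open>n\<close> form an \<open>(n,4,w)\<close> code, and the \<open>n\<close> classes partition all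
  \<open>n choose w\<close> words. For every \<open>t\<close>, the classes of the residues \<open>t - k\<close> with \<open>k < m \<le> n\<close> are
  \<open>m\<close> disjoint codes; summed over \<open>t\<close> they cover every word \<open>m\<close> times, so for some \<open>t\<close> their
  union has at least \<open>m/n \<cdot> (n choose w)\<close> elements.
\<close>

definition supp :: "bool list \<Rightarrow> nat set" where
  "supp x = {i. i < length x \<and> x ! i}"

lemma supp_subset: "supp x \<subseteq> {..<length x}"
  by (auto simp: supp_def)

lemma finite_supp: "finite (supp x)"
  using finite_subset[OF supp_subset] by blast

lemma hweight_eq_card_supp: "hweight x = card (supp x)"
  by (simp add: hweight_def supp_def)

lemma supp_inject:
  assumes "length x = length y" and "supp x = supp y"
  shows "x = y"
proof (rule nth_equalityI)
  show "length x = length y" by fact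
  fix i assume "i < length x"
  then show "x ! i = y ! i"
    using assms unfolding supp_def by (metis (mono_tags, lifting) mem_Collect_eq)
qed

lemma supp_map_mem_upt: "supp (map (\<lambda>i. i \<in> S) [0..<n]) = S \<inter> {..<n}"
  by (auto simp: supp_def)

lemma hdist_eq_card_Diff:
  assumes "length x = length y"
  shows "hdist x y = card (supp x - supp y) + card (supp y - supp x)"
proof -
  have "{i. i < length x \<and> x ! i \<noteq> y ! i} = (supp x - supp y) \<union> (supp y - supp x)"
    using assms by (auto simp: supp_def)
  then show ?thesis
    unfolding hdist_def by (simp add: card_Un_disjoint finite_supp Diff_Int_distrib2)
qed

lemma card_Diff_ge_4_if_sum_cong:
  fixes A B :: "nat set"
  assumes card_eq: "card A = card B" and "A \<noteq> B"
    and A_sub: "A \<subseteq> {..<n}" and B_sub: "B \<subseteq> {..<n}"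
    and sum_cong: "[\<Sum>A = \<Sum>B] (mod n)"
  shows "4 \<le> card (A - B) + card (B - A)"
proof -
  have fin: "finite A" "finite B"
    using A_sub B_sub finite_subset by auto
  have sym: "card (A - B) = card (B - A)"
    using card_eq fin by (simp add: card_Diff_subset_Int Int_commute)
  have "A - B \<noteq> {}"
    using \<open>A \<noteq> B\<close> card_eq fin card_subset_eq by blast
  then have nonzero: "card (A - B) \<noteq> 0"
    using fin by simp
  have not_one: "card (A - B) \<noteq> 1"
  proof
    assume "card (A - B) = 1"
    then obtain i j where i: "A - B = {i}" and j: "B - A = {j}"
      using sym by (metis card_1_singletonE)
    have "\<Sum>A = \<Sum>(A \<inter> B) + i" "\<Sum>B = \<Sum>(A \<inter> B) + j"
      using sum.Int_Diff[OF fin(1), of id B] sum.Int_Diff[OF fin(2), of id A] i j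
      by (simp_all add: Int_commute)
    then have "[i = j] (mod n)"
      using sum_cong cong_add_lcancel_nat by metis
    moreover have "i < n" "j < n"
      using i j A_sub B_sub by auto
    ultimately have "i = j"
      by (rule cong_less_modulus_unique_nat)
    then show False
      using i j by auto
  qed
  show ?thesis
    using sym nonzero not_one by linarith
qed

definition const_weight_words :: "nat \<Rightarrow> nat \<Rightarrow> bool list set" where
  "const_weight_words n w = {x. length x = n \<and> hweight x = w}"

lemma finite_const_weight_words: "finite (const_weight_words n w)"
  unfolding const_weight_words_def
  by (rule finite_subset[OF _ finite_lists_length_eq[of "UNIV :: bool set" n]]) auto

lemma bij_betw_supp_const_weight_words:
  "bij_betw supp (const_weight_words n w) {S. S \<subseteq> {..<n} \<and> card S = w}"
proof (rule bij_betw_imageI)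
  show "inj_on supp (const_weight_words n w)"
    by (auto simp: inj_on_def const_weight_words_def intro: supp_inject)
  show "supp ` const_weight_words n w = {S. S \<subseteq> {..<n} \<and> card S = w}"
  proof (intro equalityI subsetI)
    fix S assume "S \<in> {S. S \<subseteq> {..<n} \<and> card S = w}"
    then have "supp (map (\<lambda>i. i \<in> S) [0..<n]) = S"
      by (auto simp: supp_map_mem_upt)
    with \<open>S \<in> _\<close> show "S \<in> supp ` const_weight_words n w"
      unfolding const_weight_words_def hweight_eq_card_supp
      by (metis (mono_tags, lifting) diff_zero image_eqI length_map length_upt mem_Collect_eq)
  qed (auto simp: const_weight_words_def hweight_eq_card_supp dest: subsetD[OF supp_subset])
qed

lemma card_const_weight_words: "card (const_weight_words n w) = n choose w"
  using bij_betw_same_card[OF bij_betw_supp_const_weight_words] n_subsets[of "{..<n}" w]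
  by simp

definition shifted_sum_class :: "nat \<Rightarrow> nat \<Rightarrow> nat \<Rightarrow> nat \<Rightarrow> bool list set" where
  "shifted_sum_class n w k t = {x \<in> const_weight_words n w. (\<Sum>(supp x) + k) mod n = t}"

lemma finite_shifted_sum_class: "finite (shifted_sum_class n w k t)"
  unfolding shifted_sum_class_def using finite_const_weight_words by simp

lemma cw_code_shifted_sum_class: "cw_code n w (shifted_sum_class n w k t)"
  unfolding cw_code_def
proof (intro conjI ballI impI)
  fix x y assume x: "x \<in> shifted_sum_class n w k t" and y: "y \<in> shifted_sum_class n w k t"
  then have len: "length x = n" "length y = n" and "card (supp x) = card (supp y)"
    by (auto simp: shifted_sum_class_def const_weight_words_def hweight_eq_card_supp)
  moreover have "[\<Sum>(supp x) = \<Sum>(supp y)] (mod n)"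
    using x y cong_add_rcancel_nat[of "\<Sum>(supp x)" k "\<Sum>(supp y)" n]
    by (auto simp: shifted_sum_class_def cong_def)
  moreover assume "x \<noteq> y"
  then have "supp x \<noteq> supp y"
    using len supp_inject by metis
  ultimately show "4 \<le> hdist x y"
    using card_Diff_ge_4_if_sum_cong supp_subset hdist_eq_card_Diff by metis
qed (auto simp: shifted_sum_class_def const_weight_words_def)

lemma shifted_sum_classes_disjoint:
  assumes "k < n" and "l < n" and "k \<noteq> l"
  shows "shifted_sum_class n w k t \<inter> shifted_sum_class n w l t = {}"
proof -
  have "[k = l] (mod n)" if "(s + k) mod n = t" and "(s + l) mod n = t" for s
    using that cong_add_lcancel_nat unfolding cong_def by metis
  then show ?thesis
    using assms cong_less_modulus_unique_nat by (fastforce simp: shifted_sum_class_def)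
qed

lemma sum_card_shifted_sum_class:
  assumes "0 < n"
  shows "(\<Sum>t<n. card (shifted_sum_class n w k t)) = n choose w"
proof -
  have "const_weight_words n w = (\<Union>t<n. shifted_sum_class n w k t)"
    using assms by (auto simp: shifted_sum_class_def)
  moreover have "card (\<Union>t<n. shifted_sum_class n w k t) = (\<Sum>t<n. card (shifted_sum_class n w k t))"
    by (rule card_UN_disjoint) (auto simp: finite_const_weight_words shifted_sum_class_def)
  ultimately show ?thesis
    using card_const_weight_words by metis
qed

lemma exists_ge_average:
  fixes f :: "'a \<Rightarrow> nat"
  assumes "finite I" and "I \<noteq> {}"
  shows "\<exists>t\<in>I. sum f I \<le> card I * f t"
proof (rule ccontr)
  assume "\<not> ?thesis"
  then have "(\<Sum>t\<in>I. card I * f t) < (\<Sum>t\<in>I. sum f I)"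
    using assms by (intro sum_strict_mono) auto
  then show False
    by (simp add: sum_distrib_left)
qed

lemma card_UN_le_U:
  assumes "\<forall>i<m. cw_code n w (C i)"
  shows "card (\<Union>i<m. C i) \<le> U n w m"
proof -
  let ?cards = "{card (\<Union>i<m. C i) | C. \<forall>i<m. cw_code n w (C i)}"
  have "finite {x :: bool list. length x = n}"
    using finite_lists_length_eq[of "UNIV :: bool set" n] by simp
  then have "?cards \<subseteq> {..card {x :: bool list. length x = n}}"
    by (auto simp: cw_code_def intro!: card_mono)
  then have "finite ?cards"
    using finite_subset by blast
  then show ?thesis
    unfolding U_def using assms by (auto intro: Max_ge)
qed

theorem proposition19:
  fixes n w m :: nat
  assumes "0 < n" and "0 < w" and "w \<le> n" and "m \<le> n"
  shows "real (U n w m) \<ge> real m / real n * real (n choose w)"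
proof -
  let ?C = "shifted_sum_class n w"
  have "(\<Sum>t<n. \<Sum>k<m. card (?C k t)) = (\<Sum>k<m. \<Sum>t<n. card (?C k t))"
    by (rule sum.swap)
  also have "\<dots> = m * (n choose w)"
    using sum_card_shifted_sum_class[OF \<open>0 < n\<close>] by simp
  finally have "(\<Sum>t<n. \<Sum>k<m. card (?C k t)) = m * (n choose w)" .
  then obtain t where big: "m * (n choose w) \<le> n * (\<Sum>k<m. card (?C k t))"
    using exists_ge_average[of "{..<n}" "\<lambda>t. \<Sum>k<m. card (?C k t)"] \<open>0 < n\<close> by auto
  have "(\<Sum>k<m. card (?C k t)) = card (\<Union>k<m. ?C k t)"
    using \<open>m \<le> n\<close> shifted_sum_classes_disjoint
    by (intro card_UN_disjoint[symmetric]) (auto simp: finite_shifted_sum_class)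
  also have "\<dots> \<le> U n w m"
    by (intro card_UN_le_U allI impI cw_code_shifted_sum_class)
  finally have "real m * real (n choose w) \<le> real n * real (U n w m)"
    using big by (metis of_nat_le_iff of_nat_mult le_trans mult_le_mono2)
  then show ?thesis
    using \<open>0 < n\<close> by (simp add: field_simps)
qed

end
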